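(* Assume (H1) and (H2) as in the context. Let $G:S^1\times(a,b)\to\mathbb{R}$ be $G(\zeta,s)=\langle\varphi(1,s),\zeta\rangle$, with $G_s,G_{ss}$ its first and second partial derivatives in $s$. Then for every $\zeta=(\zeta_1,\zeta_2)\in S^1$ and every $s\in(a,b)$, $$\alpha_1^2\det\big(\zeta_1\varphi_1''(1,s)+\zeta_2\varphi_2''(1,s)\big)=m(m-\alpha_1)(GG_{ss})(\zeta,s)+\alpha_2(\alpha_1-\alpha_2)\,s\,(G_sG_{ss})(\zeta,s)-(m-\alpha_2)^2G_s^2(\zeta,s).$$
   Context: Fix $\alpha_1,\alpha_2>0$ with $\alpha_1\neq\alpha_2$. For $t>0$ and $x=(x_1,x_2)\in\mathbb{R}^2$ put $t\bullet x=(t^{\alpha_1}x_1,t^{\alpha_2}x_2)$. For $a<b$ let $V^{a,b}=\{t\bullet(1,s):a<s<b,\ t>0\}$ and $\varphi=(\varphi_1,\varphi_2):V^{a,b}\to\mathbb{R}^2$; $\varphi_j''(x)$ denotes the Hessian of $\varphi_j$ at $x$. (H1) $\varphi$ is real analytic on $V^{a,b}$. (H2) For some $m\ge3(\alpha_1+\alpha_2)$, $\varphi(t\bullet x)=t^m\varphi(x)$ for all $x\in V^{a,b}$, $t>0$. *)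

theory Defs
  imports "HOL-Analysis.Analysis"
begin

definition qdil :: "real \<Rightarrow> real \<Rightarrow> real \<Rightarrow> real^2 \<Rightarrow> real^2" where
  "qdil \<alpha>1 \<alpha>2 t x = vector [t powr \<alpha>1 * x$1, t powr \<alpha>2 * x$2]"

definition Vcone :: "real \<Rightarrow> real \<Rightarrow> real \<Rightarrow> real \<Rightarrow> (real^2) set" where
  "Vcone \<alpha>1 \<alpha>2 a b = {qdil \<alpha>1 \<alpha>2 t (vector [1, s]) | t s. 0 < t \<and> a < s \<and> s < b}"

text \<open>Real analyticity of a function of two real variables on a set U:
  around every point of U it is given by an (unconditionally, i.e. absolutely)
  convergent double power series on a ball contained in U.\<close>
definition real_analytic_on2 :: "(real^2 \<Rightarrow> real) \<Rightarrow> (real^2) set \<Rightarrow> bool" where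
  "real_analytic_on2 f U \<longleftrightarrow>
     (\<forall>p\<in>U. \<exists>r>0. ball p r \<subseteq> U \<and> (\<exists>c :: nat \<Rightarrow> nat \<Rightarrow> real.
        \<forall>x\<in>ball p r. ((\<lambda>(i,j). c i j * (x$1 - p$1)^i * (x$2 - p$2)^j) has_sum f x) UNIV))"

definition partial :: "2 \<Rightarrow> (real^2 \<Rightarrow> real) \<Rightarrow> real^2 \<Rightarrow> real" where
  "partial i f x = deriv (\<lambda>t. f (x + t *\<^sub>R axis i 1)) 0"

definition hessian :: "(real^2 \<Rightarrow> real) \<Rightarrow> real^2 \<Rightarrow> real^2^2" where
  "hessian f x = (\<chi> i j. partial i (partial j f) x)"

end

theory Submission
  imports Defs
begin

(* Write sigma(y) = y2 * y1 powr -(alpha2/alpha1) and g(s) = phi(1, s). Every point y of the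
   cone V is t . (1, sigma y) with t = y1 powr (1/alpha1), so homogeneity gives
   phi(y) = y1 powr (m/alpha1) * g(sigma y) on the open set V.  Both first partials of a function
   of this shape have the same shape again (with degrees lowered by 1 and by alpha2/alpha1), so two
   differentiations express the Hessian at (1, s) through g, g' and g'' at s.  These expressions are
   linear in phi, and G(zeta, .) is the same linear combination of the profiles of phi1 and phi2,
   so the determinant identity is polynomial algebra.  Analyticity is only used to make the
   profiles twice differentiable. *)

lemma power_series_DERIV2:
  fixes g :: "real \<Rightarrow> real" and c :: "nat \<Rightarrow> real"
  assumes "r > 0" and g: "\<And>h. \<bar>h\<bar> < r \<Longrightarrow> (\<lambda>j. c j * h^j) sums g (s + h)"
  shows "DERIV g s :> deriv g s" and "DERIV (deriv g) s :> deriv (deriv g) s"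
proof -
  define P where "P = (\<lambda>h. \<Sum>j. c j * h^j)"
  define P' where "P' = (\<lambda>h. \<Sum>j. diffs c j * h^j)"
  have summable: "summable (\<lambda>j. c j * h^j)" if "norm h < r" for h
    using g[of h] that sums_summable by auto
  have summable': "summable (\<lambda>j. diffs c j * h^j)" if "norm h < r" for h
    using termdiff_converges[OF that summable] .
  have P: "DERIV P h :> P' h" if "norm h < r" for h
    unfolding P_def P'_def using termdiffs_strong'[OF summable that] .
  have P': "DERIV P' h :> (\<Sum>j. diffs (diffs c) j * h^j)" if "norm h < r" for h
    unfolding P'_def using termdiffs_strong'[OF summable' that] .
  have g_eq: "g v = P (v - s)" if "v \<in> ball s r" for v
    using g[of "v - s"] that by (auto simp: P_def dist_real_def sums_iff)
  have g': "DERIV g v :> P' (v - s)" if "v \<in> ball s r" for v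
  proof (rule has_field_derivative_transform_within_open[where S="ball s r"])
    show "DERIV (\<lambda>v. P (v - s)) v :> P' (v - s)"
      using DERIV_chain2[OF P DERIV_diff[OF DERIV_ident DERIV_const]] that
      by (simp add: dist_real_def abs_minus_commute)
  qed (use that g_eq in auto)
  have "norm (s - s) < r" using \<open>r > 0\<close> by simp
  from DERIV_chain2[OF P'[OF this] DERIV_diff[OF DERIV_ident DERIV_const]]
  have "DERIV (deriv g) s :> (\<Sum>j. diffs (diffs c) j * (s - s)^j) * (1 - 0)"
    by (rule has_field_derivative_transform_within_open[where S="ball s r"])
      (use \<open>r > 0\<close> in \<open>auto simp: DERIV_imp_deriv[OF g']\<close>)
  then show "DERIV (deriv g) s :> deriv (deriv g) s"
    by (metis DERIV_imp_deriv)
  show "DERIV g s :> deriv g s"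
    using g'[of s] \<open>r > 0\<close> by (metis DERIV_imp_deriv centre_in_ball)
qed

lemma deriv2_linear_combination:
  fixes f g :: "real \<Rightarrow> real"
  assumes "open S" "s \<in> S"
    and f': "\<And>v. v \<in> S \<Longrightarrow> DERIV f v :> deriv f v" and g': "\<And>v. v \<in> S \<Longrightarrow> DERIV g v :> deriv g v"
    and f'': "DERIV (deriv f) s :> deriv (deriv f) s" and g'': "DERIV (deriv g) s :> deriv (deriv g) s"
  shows "deriv (\<lambda>v. f v * c + g v * d) s = deriv f s * c + deriv g s * d"
    and "deriv (deriv (\<lambda>v. f v * c + g v * d)) s = deriv (deriv f) s * c + deriv (deriv g) s * d"
proof -
  have D: "deriv (\<lambda>v. f v * c + g v * d) v = deriv f v * c + deriv g v * d" if "v \<in> S" for v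
    using f'[OF that] g'[OF that] by (auto intro!: DERIV_imp_deriv derivative_eq_intros)
  then show "deriv (\<lambda>v. f v * c + g v * d) s = deriv f s * c + deriv g s * d"
    using \<open>s \<in> S\<close> .
  have "eventually (\<lambda>v. deriv (\<lambda>v. f v * c + g v * d) v = deriv f v * c + deriv g v * d) (nhds s)"
    using \<open>open S\<close> \<open>s \<in> S\<close> D by (auto simp: eventually_nhds)
  then have "deriv (deriv (\<lambda>v. f v * c + g v * d)) s = deriv (\<lambda>v. deriv f v * c + deriv g v * d) s"
    by (rule deriv_cong_ev) simp
  also have "\<dots> = deriv (deriv f) s * c + deriv (deriv g) s * d"
    using f'' g'' by (auto intro!: DERIV_imp_deriv derivative_eq_intros)
  finally show "deriv (deriv (\<lambda>v. f v * c + g v * d)) s = deriv (deriv f) s * c + deriv (deriv g) s * d" .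
qed

lemma real_analytic_on2_vertical_power_series:
  assumes "real_analytic_on2 f U" "vector [x, y] \<in> U"
  obtains r c where "r > 0" "\<And>h. \<bar>h\<bar> < r \<Longrightarrow> (\<lambda>j. c j * h^j) sums f (vector [x, y + h])"
proof -
  let ?p = "vector [x, y] :: real^2"
  obtain r c where "r > 0" and c: "\<And>z. z \<in> ball ?p r \<Longrightarrow>
      ((\<lambda>(i,j). c i j * (z$1 - ?p$1)^i * (z$2 - ?p$2)^j) has_sum f z) UNIV"
    using assms unfolding real_analytic_on2_def by blast
  have "(\<lambda>j. c 0 j * h^j) sums f (vector [x, y + h])" if "\<bar>h\<bar> < r" for h
  proof -
    have "dist ?p (vector [x, y + h]) = \<bar>h\<bar>"
      by (simp add: dist_norm norm_vec_def L2_set_def sum_2)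
    with that have "((\<lambda>(i,j). c i j * 0^i * h^j) has_sum f (vector [x, y + h])) UNIV"
      using c[of "vector [x, y + h]"] by simp
    then have "((\<lambda>(i,j). c i j * 0^i * h^j) has_sum f (vector [x, y + h])) (range (Pair 0))"
      by (subst has_sum_cong_neutral[where T=UNIV and g="\<lambda>(i,j). c i j * 0^i * h^j"]) auto
    then have "((\<lambda>j. c 0 j * h^j) has_sum f (vector [x, y + h])) UNIV"
      by (subst (asm) has_sum_reindex) (auto simp: inj_on_def o_def)
    then show ?thesis by (rule has_sum_imp_sums)
  qed
  with \<open>r > 0\<close> show ?thesis by (rule that)
qed

lemma real_analytic_on2_vertical_DERIV2:
  assumes "real_analytic_on2 f U" "vector [x, y] \<in> U"
  shows "DERIV (\<lambda>v. f (vector [x, v])) y :> deriv (\<lambda>v. f (vector [x, v])) y"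
    and "DERIV (deriv (\<lambda>v. f (vector [x, v]))) y :> deriv (deriv (\<lambda>v. f (vector [x, v]))) y"
proof -
  obtain r c where "r > 0" and c: "\<And>h. \<bar>h\<bar> < r \<Longrightarrow> (\<lambda>j. c j * h^j) sums f (vector [x, y + h])"
    using real_analytic_on2_vertical_power_series[OF assms] by blast
  note power_series_DERIV2[OF \<open>r > 0\<close>, of c "\<lambda>v. f (vector [x, v])" y]
  with c show "DERIV (\<lambda>v. f (vector [x, v])) y :> deriv (\<lambda>v. f (vector [x, v])) y"
    and "DERIV (deriv (\<lambda>v. f (vector [x, v]))) y :> deriv (deriv (\<lambda>v. f (vector [x, v]))) y"
    by simp_all
qed

lemma partial_eqI:
  assumes "eventually (\<lambda>z. f z = F z) (nhds y)"
    and "DERIV (\<lambda>t. F (y + t *\<^sub>R axis i 1)) 0 :> D"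
  shows "partial i f y = D"
proof -
  have "((\<lambda>t. y + t *\<^sub>R axis i 1) \<longlongrightarrow> y) (nhds 0)"
    by (auto intro!: tendsto_eq_intros filterlim_ident)
  with assms(1) have "eventually (\<lambda>t. f (y + t *\<^sub>R axis i 1) = F (y + t *\<^sub>R axis i 1)) (nhds 0)"
    by (rule eventually_compose_filterlim)
  then have "partial i f y = deriv (\<lambda>t. F (y + t *\<^sub>R axis i 1)) 0"
    unfolding partial_def by (rule deriv_cong_ev) simp
  with assms(2) show ?thesis
    by (simp add: DERIV_imp_deriv)
qed

lemma partial_quasi_homogeneous:
  fixes f :: "real^2 \<Rightarrow> real" and g :: "real \<Rightarrow> real" and y :: "real^2"
  assumes "open W" "y \<in> W"
    and pos: "\<And>z. z \<in> W \<Longrightarrow> 0 < z$1"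
    and f: "\<And>z. z \<in> W \<Longrightarrow> f z = z$1 powr k * g (z$2 * z$1 powr -\<beta>)"
    and g: "DERIV g (y$2 * y$1 powr -\<beta>) :> D"
  shows "partial 1 f y = y$1 powr (k - 1) *
           (k * g (y$2 * y$1 powr -\<beta>) - \<beta> * (y$2 * y$1 powr -\<beta>) * D)"
    and "partial 2 f y = y$1 powr (k - \<beta>) * D"
proof -
  have "0 < y$1" using pos \<open>y \<in> W\<close> .
  have f_near: "eventually (\<lambda>z. f z = z$1 powr k * g (z$2 * z$1 powr -\<beta>)) (nhds y)"
    using \<open>open W\<close> \<open>y \<in> W\<close> f by (auto simp: eventually_nhds)
  have "DERIV (\<lambda>t. (y$1 + t) powr k * g (y$2 * (y$1 + t) powr -\<beta>)) 0 :> y$1 powr (k - 1) *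
           (k * g (y$2 * y$1 powr -\<beta>) - \<beta> * (y$2 * y$1 powr -\<beta>) * D)"
    using \<open>0 < y$1\<close> g by (auto intro!: derivative_eq_intros DERIV_chain2[where f=g])
      (simp add: field_simps flip: powr_add)
  then show "partial 1 f y = y$1 powr (k - 1) *
           (k * g (y$2 * y$1 powr -\<beta>) - \<beta> * (y$2 * y$1 powr -\<beta>) * D)"
    using partial_eqI[OF f_near, of 1] by (simp add: axis_def)
  have "DERIV (\<lambda>t. y$1 powr k * g ((y$2 + t) * y$1 powr -\<beta>)) 0 :>
           y$1 powr (k - \<beta>) * D"
    using \<open>0 < y$1\<close> g by (auto intro!: derivative_eq_intros DERIV_chain2[where f=g])
      (simp add: field_simps flip: powr_add)
  then show "partial 2 f y = y$1 powr (k - \<beta>) * D"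
    using partial_eqI[OF f_near, of 2] by (simp add: axis_def)
qed

lemma hessian_quasi_homogeneous:
  fixes f :: "real^2 \<Rightarrow> real" and g g' g'' :: "real \<Rightarrow> real"
  assumes "open W" "vector [1, s] \<in> W"
    and pos: "\<And>z. z \<in> W \<Longrightarrow> 0 < z$1"
    and f: "\<And>z. z \<in> W \<Longrightarrow> f z = z$1 powr k * g (z$2 * z$1 powr -\<beta>)"
    and g': "\<And>z. z \<in> W \<Longrightarrow> DERIV g (z$2 * z$1 powr -\<beta>) :> g' (z$2 * z$1 powr -\<beta>)"
    and g'': "\<And>z. z \<in> W \<Longrightarrow> DERIV g' (z$2 * z$1 powr -\<beta>) :> g'' (z$2 * z$1 powr -\<beta>)"
  shows "hessian f (vector [1, s]) $1$1 = k * (k - 1) * g s - \<beta> * s * (2 * k - \<beta> - 1) * g' s + \<beta>^2 * s^2 * g'' s"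
    and "hessian f (vector [1, s]) $1$2 = (k - \<beta>) * g' s - \<beta> * s * g'' s"
    and "hessian f (vector [1, s]) $2$1 = (k - \<beta>) * g' s - \<beta> * s * g'' s"
    and "hessian f (vector [1, s]) $2$2 = g'' s"
proof -
  let ?p = "vector [1, s] :: real^2"
  define h where "h v = k * g v - \<beta> * v * g' v" for v
  define h' where "h' v = (k - \<beta>) * g' v - \<beta> * v * g'' v" for v
  have f1: "partial 1 f z = z$1 powr (k - 1) * h (z$2 * z$1 powr -\<beta>)" if "z \<in> W" for z
    using partial_quasi_homogeneous(1)[where g=g, OF \<open>open W\<close> that pos f g'[OF that]] by (simp add: h_def)
  have f2: "partial 2 f z = z$1 powr (k - \<beta>) * g' (z$2 * z$1 powr -\<beta>)" if "z \<in> W" for z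
    using partial_quasi_homogeneous(2)[where g=g, OF \<open>open W\<close> that pos f g'[OF that]] .
  have h: "DERIV h (z$2 * z$1 powr -\<beta>) :> h' (z$2 * z$1 powr -\<beta>)" if "z \<in> W" for z
    unfolding h_def h'_def using g'[OF that] g''[OF that]
    by (auto intro!: derivative_eq_intros simp: algebra_simps)
  note f11 = partial_quasi_homogeneous(1)[where g=h, OF \<open>open W\<close> \<open>?p \<in> W\<close> pos f1 h[OF \<open>?p \<in> W\<close>]]
   and f12 = partial_quasi_homogeneous(1)[where g=g', OF \<open>open W\<close> \<open>?p \<in> W\<close> pos f2 g''[OF \<open>?p \<in> W\<close>]]
   and f21 = partial_quasi_homogeneous(2)[where g=h, OF \<open>open W\<close> \<open>?p \<in> W\<close> pos f1 h[OF \<open>?p \<in> W\<close>]]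
   and f22 = partial_quasi_homogeneous(2)[where g=g', OF \<open>open W\<close> \<open>?p \<in> W\<close> pos f2 g''[OF \<open>?p \<in> W\<close>]]
  show "hessian f ?p $1$1 = k * (k - 1) * g s - \<beta> * s * (2 * k - \<beta> - 1) * g' s + \<beta>^2 * s^2 * g'' s"
    using f11 by (simp add: hessian_def h_def h'_def algebra_simps power2_eq_square)
  show "hessian f ?p $1$2 = (k - \<beta>) * g' s - \<beta> * s * g'' s"
    using f12 by (simp add: hessian_def algebra_simps)
  show "hessian f ?p $2$1 = (k - \<beta>) * g' s - \<beta> * s * g'' s"
    using f21 by (simp add: hessian_def h'_def)
  show "hessian f ?p $2$2 = g'' s"
    using f22 by (simp add: hessian_def)
qed

lemma qdil_vector_1 [simp]:
  "qdil \<alpha>1 \<alpha>2 t (vector [1, s]) = vector [t powr \<alpha>1, t powr \<alpha>2 * s]"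
  by (simp add: qdil_def)

lemma qdil_vector_1_ratio:
  fixes \<alpha>1 \<alpha>2 s t :: real
  assumes "\<alpha>1 \<noteq> 0" "t > 0"
  shows "t powr \<alpha>2 * s * (t powr \<alpha>1) powr -(\<alpha>2/\<alpha>1) = s"
proof -
  have "(t powr \<alpha>1) powr -(\<alpha>2/\<alpha>1) = t powr -\<alpha>2"
    using assms by (simp add: powr_powr)
  then show ?thesis
    using \<open>t > 0\<close> by (simp add: mult.assoc mult.left_commute[of s] flip: powr_add)
qed

lemma vector_1_in_Vcone: "a < s \<Longrightarrow> s < b \<Longrightarrow> vector [1, s] \<in> Vcone \<alpha>1 \<alpha>2 a b"
  unfolding Vcone_def by (rule CollectI, intro exI[of _ 1] exI[of _ s]) auto

lemma Vcone_eq: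
  assumes "\<alpha>1 > 0"
  shows "Vcone \<alpha>1 \<alpha>2 a b = {y. 0 < y$1 \<and> y$2 * y$1 powr -(\<alpha>2/\<alpha>1) \<in> {a<..<b}}"
proof (intro set_eqI iffI)
  fix y :: "real^2"
  assume "y \<in> Vcone \<alpha>1 \<alpha>2 a b"
  then obtain t s where "0 < t" "a < s" "s < b" and "y = qdil \<alpha>1 \<alpha>2 t (vector [1, s])"
    unfolding Vcone_def by blast
  then show "y \<in> {y. 0 < y$1 \<and> y$2 * y$1 powr -(\<alpha>2/\<alpha>1) \<in> {a<..<b}}"
    using assms by (simp add: qdil_vector_1_ratio)
next
  fix y :: "real^2"
  assume "y \<in> {y. 0 < y$1 \<and> y$2 * y$1 powr -(\<alpha>2/\<alpha>1) \<in> {a<..<b}}"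
  then have "0 < y$1" and s: "a < y$2 * y$1 powr -(\<alpha>2/\<alpha>1)" "y$2 * y$1 powr -(\<alpha>2/\<alpha>1) < b"
    by auto
  define t where "t = y$1 powr (1/\<alpha>1)"
  have "y = qdil \<alpha>1 \<alpha>2 t (vector [1, y$2 * y$1 powr -(\<alpha>2/\<alpha>1)])"
    using \<open>0 < y$1\<close> assms by (simp add: t_def vec_eq_iff forall_2 powr_powr flip: powr_add)
  moreover have "t > 0"
    using \<open>0 < y$1\<close> by (simp add: t_def)
  ultimately show "y \<in> Vcone \<alpha>1 \<alpha>2 a b"
    using s unfolding Vcone_def by blast
qed

lemma open_Vcone:
  assumes "\<alpha>1 > 0"
  shows "open (Vcone \<alpha>1 \<alpha>2 a b)"
proof -
  have "open ({y::real^2. 0 < y$1} \<inter> (\<lambda>y. y$2 * y$1 powr -(\<alpha>2/\<alpha>1)) -` {a<..<b})"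
    by (intro continuous_open_preimage continuous_intros open_halfspace_component_gt_cart
        open_greaterThanLessThan) auto
  then show ?thesis
    unfolding Vcone_eq[OF assms] by (simp add: Collect_conj_eq vimage_def)
qed

lemma qdil_homogeneous_eq_profile:
  fixes \<phi> :: "real^2 \<Rightarrow> real"
  assumes "\<alpha>1 > 0"
    and hom: "\<And>x t. x \<in> Vcone \<alpha>1 \<alpha>2 a b \<Longrightarrow> t > 0 \<Longrightarrow> \<phi> (qdil \<alpha>1 \<alpha>2 t x) = t powr m * \<phi> x"
    and "y \<in> Vcone \<alpha>1 \<alpha>2 a b"
  shows "\<phi> y = y$1 powr (m/\<alpha>1) * \<phi> (vector [1, y$2 * y$1 powr -(\<alpha>2/\<alpha>1)])"
proof -
  from \<open>y \<in> Vcone \<alpha>1 \<alpha>2 a b\<close> obtain t s where "0 < t" "a < s" "s < b"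
    and y: "y = qdil \<alpha>1 \<alpha>2 t (vector [1, s])"
    unfolding Vcone_def by blast
  have "\<phi> y = t powr m * \<phi> (vector [1, s])"
    using hom[OF vector_1_in_Vcone \<open>0 < t\<close>] \<open>a < s\<close> \<open>s < b\<close> by (simp add: y)
  moreover have "t powr m = y$1 powr (m/\<alpha>1)"
    using assms \<open>0 < t\<close> by (simp add: y powr_powr)
  ultimately show ?thesis
    using assms \<open>0 < t\<close> by (simp add: y qdil_vector_1_ratio)
qed

lemma hessian_qdil_homogeneous:
  fixes \<phi> :: "real^2 \<Rightarrow> real"
  assumes "\<alpha>1 > 0" "a < s" "s < b"
    and analytic: "real_analytic_on2 \<phi> (Vcone \<alpha>1 \<alpha>2 a b)"
    and hom: "\<And>x t. x \<in> Vcone \<alpha>1 \<alpha>2 a b \<Longrightarrow> t > 0 \<Longrightarrow> \<phi> (qdil \<alpha>1 \<alpha>2 t x) = t powr m * \<phi> x"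
  defines "g \<equiv> \<lambda>v. \<phi> (vector [1, v])"
  shows "\<alpha>1^2 * hessian \<phi> (vector [1, s]) $1$1
           = m * (m - \<alpha>1) * g s - \<alpha>2 * s * (2 * m - \<alpha>1 - \<alpha>2) * deriv g s + \<alpha>2^2 * s^2 * deriv (deriv g) s"
    and "\<alpha>1 * hessian \<phi> (vector [1, s]) $1$2 = (m - \<alpha>2) * deriv g s - \<alpha>2 * s * deriv (deriv g) s"
    and "\<alpha>1 * hessian \<phi> (vector [1, s]) $2$1 = (m - \<alpha>2) * deriv g s - \<alpha>2 * s * deriv (deriv g) s"
    and "hessian \<phi> (vector [1, s]) $2$2 = deriv (deriv g) s"
proof -
  let ?V = "Vcone \<alpha>1 \<alpha>2 a b"
  have V: "0 < z$1" "a < z$2 * z$1 powr -(\<alpha>2/\<alpha>1)" "z$2 * z$1 powr -(\<alpha>2/\<alpha>1) < b" if "z \<in> ?V" for z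
    using that unfolding Vcone_eq[OF \<open>\<alpha>1 > 0\<close>] by auto
  have g_DERIV2: "DERIV g v :> deriv g v" "DERIV (deriv g) v :> deriv (deriv g) v" if "a < v" "v < b" for v
    using real_analytic_on2_vertical_DERIV2[OF analytic vector_1_in_Vcone[OF that]] unfolding g_def .
  have \<phi>_eq: "\<phi> z = z$1 powr (m/\<alpha>1) * g (z$2 * z$1 powr -(\<alpha>2/\<alpha>1))" if "z \<in> ?V" for z
    using qdil_homogeneous_eq_profile[OF \<open>\<alpha>1 > 0\<close> hom that] by (simp add: g_def)
  have g': "DERIV g (z$2 * z$1 powr -(\<alpha>2/\<alpha>1)) :> deriv g (z$2 * z$1 powr -(\<alpha>2/\<alpha>1))"
    and g'': "DERIV (deriv g) (z$2 * z$1 powr -(\<alpha>2/\<alpha>1)) :> deriv (deriv g) (z$2 * z$1 powr -(\<alpha>2/\<alpha>1))"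
    if "z \<in> ?V" for z
    using g_DERIV2 V[OF that] by auto
  note hessian_entries = hessian_quasi_homogeneous[where f=\<phi> and g=g and g'="deriv g" and g''="deriv (deriv g)",
      OF open_Vcone[OF \<open>\<alpha>1 > 0\<close>] vector_1_in_Vcone[OF \<open>a < s\<close> \<open>s < b\<close>] V(1) \<phi>_eq g' g'']
  show "\<alpha>1^2 * hessian \<phi> (vector [1, s]) $1$1
           = m * (m - \<alpha>1) * g s - \<alpha>2 * s * (2 * m - \<alpha>1 - \<alpha>2) * deriv g s + \<alpha>2^2 * s^2 * deriv (deriv g) s"
    and "\<alpha>1 * hessian \<phi> (vector [1, s]) $1$2 = (m - \<alpha>2) * deriv g s - \<alpha>2 * s * deriv (deriv g) s"
    and "\<alpha>1 * hessian \<phi> (vector [1, s]) $2$1 = (m - \<alpha>2) * deriv g s - \<alpha>2 * s * deriv (deriv g) s"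
    and "hessian \<phi> (vector [1, s]) $2$2 = deriv (deriv g) s"
    using \<open>\<alpha>1 > 0\<close> by (simp_all only: hessian_entries) (simp_all add: field_simps power2_eq_square)
qed

lemma det_lincomb_quasi_homogeneous_hessians:
  fixes A B :: "real^2^2"
  assumes A: "\<alpha>1^2 * A$1$1 = m * (m - \<alpha>1) * a0 - \<alpha>2 * s * (2 * m - \<alpha>1 - \<alpha>2) * a1 + \<alpha>2^2 * s^2 * a2"
      "\<alpha>1 * A$1$2 = (m - \<alpha>2) * a1 - \<alpha>2 * s * a2" "\<alpha>1 * A$2$1 = (m - \<alpha>2) * a1 - \<alpha>2 * s * a2"
      "A$2$2 = a2"
    and B: "\<alpha>1^2 * B$1$1 = m * (m - \<alpha>1) * b0 - \<alpha>2 * s * (2 * m - \<alpha>1 - \<alpha>2) * b1 + \<alpha>2^2 * s^2 * b2"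
      "\<alpha>1 * B$1$2 = (m - \<alpha>2) * b1 - \<alpha>2 * s * b2" "\<alpha>1 * B$2$1 = (m - \<alpha>2) * b1 - \<alpha>2 * s * b2"
      "B$2$2 = b2"
  shows "\<alpha>1^2 * det (\<zeta>1 *\<^sub>R A + \<zeta>2 *\<^sub>R B)
    = m * (m - \<alpha>1) * ((a0 * \<zeta>1 + b0 * \<zeta>2) * (a2 * \<zeta>1 + b2 * \<zeta>2))
      + \<alpha>2 * (\<alpha>1 - \<alpha>2) * s * ((a1 * \<zeta>1 + b1 * \<zeta>2) * (a2 * \<zeta>1 + b2 * \<zeta>2))
      - (m - \<alpha>2)^2 * (a1 * \<zeta>1 + b1 * \<zeta>2)^2"
proof -
  have "\<alpha>1^2 * det (\<zeta>1 *\<^sub>R A + \<zeta>2 *\<^sub>R B)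
    = (\<zeta>1 * (\<alpha>1^2 * A$1$1) + \<zeta>2 * (\<alpha>1^2 * B$1$1)) * (\<zeta>1 * A$2$2 + \<zeta>2 * B$2$2)
      - (\<zeta>1 * (\<alpha>1 * A$1$2) + \<zeta>2 * (\<alpha>1 * B$1$2)) * (\<zeta>1 * (\<alpha>1 * A$2$1) + \<zeta>2 * (\<alpha>1 * B$2$1))"
    by (simp add: det_2 algebra_simps power2_eq_square)
  also have "\<dots> = m * (m - \<alpha>1) * ((a0 * \<zeta>1 + b0 * \<zeta>2) * (a2 * \<zeta>1 + b2 * \<zeta>2))
      + \<alpha>2 * (\<alpha>1 - \<alpha>2) * s * ((a1 * \<zeta>1 + b1 * \<zeta>2) * (a2 * \<zeta>1 + b2 * \<zeta>2))
      - (m - \<alpha>2)^2 * (a1 * \<zeta>1 + b1 * \<zeta>2)^2"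
    unfolding A B by (simp add: algebra_simps power2_eq_square)
  finally show ?thesis .
qed

theorem lemma2p3:
  fixes \<alpha>1 \<alpha>2 a b m :: real
    and \<phi>1 \<phi>2 :: "real^2 \<Rightarrow> real"
    and G :: "real \<Rightarrow> real \<Rightarrow> real \<Rightarrow> real"
  assumes "\<alpha>1 > 0" and "\<alpha>2 > 0" and "\<alpha>1 \<noteq> \<alpha>2" and "a < b"
    and H1: "real_analytic_on2 \<phi>1 (Vcone \<alpha>1 \<alpha>2 a b)"
            "real_analytic_on2 \<phi>2 (Vcone \<alpha>1 \<alpha>2 a b)"
    and H2m: "m \<ge> 3 * (\<alpha>1 + \<alpha>2)"
    and H2: "\<And>x t. x \<in> Vcone \<alpha>1 \<alpha>2 a b \<Longrightarrow> t > 0 \<Longrightarrow>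
               \<phi>1 (qdil \<alpha>1 \<alpha>2 t x) = t powr m * \<phi>1 x \<and>
               \<phi>2 (qdil \<alpha>1 \<alpha>2 t x) = t powr m * \<phi>2 x"
    and G_def: "\<And>\<zeta>1 \<zeta>2 s. G \<zeta>1 \<zeta>2 s = \<phi>1 (vector [1, s]) * \<zeta>1 + \<phi>2 (vector [1, s]) * \<zeta>2"
  shows "\<forall>\<zeta>1 \<zeta>2 s. \<zeta>1\<^sup>2 + \<zeta>2\<^sup>2 = 1 \<and> a < s \<and> s < b \<longrightarrow>
    (let Gs = (\<lambda>u. deriv (\<lambda>v. G \<zeta>1 \<zeta>2 v) u);
         Gss = deriv Gs s
     in \<alpha>1\<^sup>2 * det (\<zeta>1 *\<^sub>R hessian \<phi>1 (vector [1, s]) + \<zeta>2 *\<^sub>R hessian \<phi>2 (vector [1, s]))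
        = m * (m - \<alpha>1) * (G \<zeta>1 \<zeta>2 s * Gss)
          + \<alpha>2 * (\<alpha>1 - \<alpha>2) * s * (Gs s * Gss)
          - (m - \<alpha>2)\<^sup>2 * (Gs s)\<^sup>2)"
proof (intro allI impI)
  fix \<zeta>1 \<zeta>2 s :: real
  assume "\<zeta>1\<^sup>2 + \<zeta>2\<^sup>2 = 1 \<and> a < s \<and> s < b"
  then have s: "a < s" "s < b" by auto
  define g1 where "g1 = (\<lambda>v. \<phi>1 (vector [1, v]))"
  define g2 where "g2 = (\<lambda>v. \<phi>2 (vector [1, v]))"
  have G: "G \<zeta>1 \<zeta>2 = (\<lambda>v. g1 v * \<zeta>1 + g2 v * \<zeta>2)"
    by (simp add: fun_eq_iff G_def g1_def g2_def)
  have "DERIV g1 v :> deriv g1 v" "DERIV (deriv g1) v :> deriv (deriv g1) v"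
    "DERIV g2 v :> deriv g2 v" "DERIV (deriv g2) v :> deriv (deriv g2) v" if "v \<in> {a<..<b}" for v
    using real_analytic_on2_vertical_DERIV2[OF H1(1) vector_1_in_Vcone]
      real_analytic_on2_vertical_DERIV2[OF H1(2) vector_1_in_Vcone] that
    unfolding g1_def g2_def by auto
  then have Gs: "deriv (G \<zeta>1 \<zeta>2) s = deriv g1 s * \<zeta>1 + deriv g2 s * \<zeta>2"
    and Gss: "deriv (deriv (G \<zeta>1 \<zeta>2)) s = deriv (deriv g1) s * \<zeta>1 + deriv (deriv g2) s * \<zeta>2"
    using deriv2_linear_combination[OF open_greaterThanLessThan, of s a b g1 g2] s unfolding G by auto
  note hessian1 = hessian_qdil_homogeneous[OF \<open>\<alpha>1 > 0\<close> s H1(1) H2[THEN conjunct1], folded g1_def]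
   and hessian2 = hessian_qdil_homogeneous[OF \<open>\<alpha>1 > 0\<close> s H1(2) H2[THEN conjunct2], folded g2_def]
  show "let Gs = (\<lambda>u. deriv (\<lambda>v. G \<zeta>1 \<zeta>2 v) u); Gss = deriv Gs s
     in \<alpha>1\<^sup>2 * det (\<zeta>1 *\<^sub>R hessian \<phi>1 (vector [1, s]) + \<zeta>2 *\<^sub>R hessian \<phi>2 (vector [1, s]))
        = m * (m - \<alpha>1) * (G \<zeta>1 \<zeta>2 s * Gss)
          + \<alpha>2 * (\<alpha>1 - \<alpha>2) * s * (Gs s * Gss)
          - (m - \<alpha>2)\<^sup>2 * (Gs s)\<^sup>2"
    using det_lincomb_quasi_homogeneous_hessians[OF hessian1 hessian2, of \<zeta>1 \<zeta>2]
    unfolding Let_def Gs Gss by (simp add: G_def g1_def g2_def)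
qed

end
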